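(* For $n\ge0$ let $Q_n^L(x)=\sum_{r=0}^{n}\left[\binom{n}{r}\sum_{\ell=0}^{r}\binom{r}{\ell}\frac{1}{\ell!}\right](-x)^r$ (the coefficient polynomials of the linear transformation $x^n\mapsto L_n(x)$). Then for every $n$, all roots of $Q_n^L$ are real and lie in the open interval $(0,1)$, and the roots of $Q_n^L$ and $Q_{n+1}^L$ strictly interlace.
   Context: $L_n(x)=\sum_{k=0}^n\binom{n}{k}\frac{(-x)^k}{k!}$ is the $n$th Laguerre polynomial. Strict interlacing of the roots of a degree-$n$ polynomial and a degree-$(n+1)$ polynomial means their roots $s_1<\dots<s_{n+1}$ and $r_1<\dots<r_n$ are simple and satisfy $s_1<r_1<s_2<r_2<\cdots<r_n<s_{n+1}$. *)

theory Defs
  imports Complex_Main "HOL-Computational_Algebra.Polynomial"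
begin

definition QL :: "nat \<Rightarrow> real poly" where
  "QL n = (\<Sum>r\<le>n. monom (real (n choose r) * (\<Sum>l\<le>r. real (r choose l) / fact l) * (-1) ^ r) r)"

definition strictly_interlace :: "real poly \<Rightarrow> real poly \<Rightarrow> bool" where
  "strictly_interlace p q \<longleftrightarrow>
     (\<exists>rs ss. degree q = degree p + 1 \<and>
        length rs = degree p \<and> length ss = degree q \<and>
        sorted_wrt (<) rs \<and> sorted_wrt (<) ss \<and>
        set rs = {x. poly p x = 0} \<and> set ss = {x. poly q x = 0} \<and>
        (\<forall>x\<in>set rs. order x p = 1) \<and> (\<forall>x\<in>set ss. order x q = 1) \<and>
        (\<forall>i < length rs. ss ! i < rs ! i \<and> rs ! i < ss ! (i + 1)))"

end

theory Submission
  imports Defs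
begin

text \<open>
  For x \<noteq> 1 one has Q_n(x) = (1 - x)^n L_n(x / (1 - x)), so the Laguerre recurrence
  (n + 2) L_{n+2}(t) = (2n + 3 - t) L_{n+1}(t) - (n + 1) L_n(t) becomes
  (n + 2) Q_{n+2} = (2n + 3 - (2n + 4) x) Q_{n+1} - (n + 1) (1 - x)^2 Q_n, whose last coefficient
  is positive on (0, 1); moreover Q_n(0) = 1 and Q_n(1) = (-1)^n / n!.
  This is the classical setting for interlacing: if the n roots of Q_n interlace with the
  n + 1 roots of Q_{n+1} in (0, 1), then at the roots of Q_{n+1} the polynomial Q_{n+2} has the
  sign of -Q_n, which alternates, and together with the signs at 0 and 1 the intermediate value
  theorem yields n + 2 roots of Q_{n+2} interlacing with those of Q_{n+1}. A polynomial of
  degree m with m distinct real roots is a constant multiple of the product of the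
  corresponding linear factors, so these roots are simple and there are no others, real or
  complex.
\<close>

section \<open>Polynomials with as many distinct roots as their degree\<close>

lemma poly_eq_smult_prod_roots:
  fixes p :: "'a::idom poly"
  assumes "finite S" "card S = degree p" "\<And>x. x \<in> S \<Longrightarrow> poly p x = 0"
  shows "p = smult (lead_coeff p) (\<Prod>x\<in>S. [:-x, 1:])"
  using assms
proof (induction S arbitrary: p rule: finite_induct)
  case empty
  then have "p = [:coeff p 0:]"
    by (simp add: degree_0_id)
  then show ?case
    by (metis lead_coeff_pCons(2) pCons_0_0 prod.empty smult_one)
next
  case (insert x S)
  obtain q where p: "p = [:-x, 1:] * q"
    using insert.prems(2) by (metis insertI1 dvdE poly_eq_0_iff_dvd)
  have "q \<noteq> 0" using insert.prems(1) insert.hyps by (auto simp: p)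
  then have "degree p = Suc (degree q)"
    unfolding p by (subst degree_mult_eq) auto
  then have "card S = degree q"
    using insert.prems(1) insert.hyps by simp
  moreover have "poly q y = 0" if "y \<in> S" for y
    using insert.prems(2)[of y] that insert.hyps(2) by (auto simp: p)
  ultimately have q: "q = smult (lead_coeff q) (\<Prod>x\<in>S. [:-x, 1:])"
    by (rule insert.IH)
  have "lead_coeff p = lead_coeff q"
    unfolding p lead_coeff_mult by simp
  then have "smult (lead_coeff p) (\<Prod>x\<in>insert x S. [:-x, 1:]) = [:-x, 1:] * q"
    by (subst q) (simp only: prod.insert[OF insert.hyps] mult_smult_right)
  then show ?case
    by (simp only: p)
qed

lemma proots_eq_mset_set:
  fixes p :: "'a::idom poly"
  assumes "p \<noteq> 0" "finite S" "card S = degree p" "\<And>x. x \<in> S \<Longrightarrow> poly p x = 0"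
  shows "proots p = mset_set S"
proof -
  have "lead_coeff p \<noteq> 0"
    using assms(1) by simp
  then have "proots p = proots (\<Prod>x\<in>S. [:-x, 1:])"
    using poly_eq_smult_prod_roots[OF assms(2-4)] by (metis proots_smult)
  also have "\<dots> = (\<Sum>x\<in>S. {#x#})"
    by (simp add: proots_prod)
  finally show ?thesis
    by simp
qed

lemma poly_roots_eq_if_card_eq_degree:
  fixes p :: "'a::idom poly"
  assumes "p \<noteq> 0" "finite S" "card S = degree p" "\<And>x. x \<in> S \<Longrightarrow> poly p x = 0"
  shows "{x. poly p x = 0} = S"
  using proots_eq_mset_set[OF assms] set_count_proots[OF assms(1)] assms(2) by simp

lemma order_eq_1_if_card_eq_degree:
  fixes p :: "'a::idom poly"
  assumes "p \<noteq> 0" "finite S" "card S = degree p" "\<And>x. x \<in> S \<Longrightarrow> poly p x = 0" "x \<in> S"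
  shows "order x p = 1"
  using proots_eq_mset_set[OF assms(1-4)] count_proots[OF assms(1), of x] assms(2,5) by simp

lemma poly_map_poly_of_real:
  "poly (map_poly of_real p) (of_real x) = (of_real (poly p x) :: 'a::{real_algebra_1,comm_semiring_0})"
  by (induction p) (auto simp: map_poly_pCons)

lemma roots_map_poly_complex_of_real:
  fixes p :: "real poly"
  assumes "p \<noteq> 0" "finite S" "card S = degree p" "\<And>x. x \<in> S \<Longrightarrow> poly p x = 0"
  shows "{z. poly (map_poly complex_of_real p) z = 0} = complex_of_real ` S"
proof -
  let ?cp = "map_poly complex_of_real p"
  have "?cp \<noteq> 0" "degree ?cp = degree p"
    using assms(1) by (simp_all add: map_poly_eq_0_iff degree_map_poly)
  moreover have "card (complex_of_real ` S) = card S"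
    by (simp add: card_image inj_on_def)
  moreover have "poly ?cp z = 0" if "z \<in> complex_of_real ` S" for z
    using that assms(4) by (auto simp: poly_map_poly_of_real)
  ultimately show ?thesis
    using assms(2,3) by (intro poly_roots_eq_if_card_eq_degree) auto
qed

lemma poly_sign_by_roots_below:
  fixes p :: "real poly"
  assumes "finite S" "card S = degree p" "\<And>x. x \<in> S \<Longrightarrow> poly p x = 0"
    and "\<And>x. x \<in> S \<Longrightarrow> a < x" "0 < poly p a" "t \<notin> S"
  shows "0 < (-1) ^ card {x\<in>S. x < t} * poly p t"
proof -
  define c where "c = lead_coeff p"
  have p_eq: "p = smult c (\<Prod>x\<in>S. [:-x, 1:])"
    unfolding c_def by (rule poly_eq_smult_prod_roots[OF assms(1-3)])
  have eval: "poly p y = c * (\<Prod>x\<in>S. y - x)" for y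
    by (subst p_eq) (simp add: poly_prod)
  have "c \<noteq> 0"
    using assms(5) by (auto simp: eval)
  have "(-1) ^ card {x\<in>S. x < t} = (\<Prod>x\<in>S. if x < t then -1 else 1 :: real)"
    using assms(1) by (simp add: prod.If_cases Int_def conj_commute)
  then have "poly p a * ((-1) ^ card {x\<in>S. x < t} * poly p t)
      = c\<^sup>2 * ((\<Prod>x\<in>S. if x < t then -1 else 1) * ((\<Prod>x\<in>S. a - x) * (\<Prod>x\<in>S. t - x)))"
    by (simp only: eval power2_eq_square mult_ac)
  also have "\<dots> = c\<^sup>2 * (\<Prod>x\<in>S. (if x < t then -1 else 1) * ((a - x) * (t - x)))"
    by (simp only: prod.distrib)
  also have "\<dots> > 0"
  proof -
    have "0 < (if x < t then -1 else 1) * ((a - x) * (t - x))" if "x \<in> S" for x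
    proof -
      have "a < x" "x \<noteq> t"
        using assms(4,6) that by auto
      then show ?thesis
        by (cases "x < t") (auto simp: mult_less_0_iff zero_less_mult_iff)
    qed
    then show ?thesis
      using \<open>c \<noteq> 0\<close> by (simp add: prod_pos)
  qed
  finally show ?thesis
    using assms(5) by (simp add: zero_less_mult_iff)
qed

lemma roots_between_alternating_signs:
  fixes p :: "real poly" and x :: "nat \<Rightarrow> real"
  assumes "\<And>j. j < m \<Longrightarrow> x j < x (Suc j)" "\<And>j. j \<le> m \<Longrightarrow> 0 < (-1) ^ j * poly p (x j)"
  shows "\<exists>u. \<forall>j<m. x j < u j \<and> u j < x (Suc j) \<and> poly p (u j) = 0"
proof -
  have "\<exists>t. x j < t \<and> t < x (Suc j) \<and> poly p t = 0" if "j < m" for j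
  proof -
    have "0 < (-1) ^ j * poly p (x j)" "0 < (-1) ^ Suc j * poly p (x (Suc j))"
      using assms(2)[of j] assms(2)[of "Suc j"] that by auto
    then have "poly p (x j) * poly p (x (Suc j)) < 0"
      by (cases "even j") (auto simp: mult_less_0_iff zero_less_mult_iff)
    then show ?thesis
      using poly_IVT[OF assms(1)[OF that]] by blast
  qed
  then show ?thesis
    by metis
qed

section \<open>Interlacing roots of a three-term recurrence\<close>

lemma strict_mono_on_lessThanI:
  fixes f :: "nat \<Rightarrow> 'a::order"
  assumes "\<And>i. Suc i < n \<Longrightarrow> f i < f (Suc i)"
  shows "strict_mono_on {..<n} f"
proof (rule strict_mono_onI)
  fix i j :: nat
  assume "i \<in> {..<n}" "j \<in> {..<n}" "i < j"
  then show "f i < f j"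
    by (induction j) (auto simp: less_Suc_eq intro: assms order.strict_trans)
qed

definition interlacing_roots ::
    "real \<Rightarrow> real \<Rightarrow> real poly \<Rightarrow> real poly \<Rightarrow> nat \<Rightarrow> (nat \<Rightarrow> real) \<Rightarrow> (nat \<Rightarrow> real) \<Rightarrow> bool" where
  "interlacing_roots a b p q n r s \<longleftrightarrow>
     a < s 0 \<and> s n < b \<and> (\<forall>i<n. s i < r i \<and> r i < s (Suc i)) \<and>
     (\<forall>i<n. poly p (r i) = 0) \<and> (\<forall>i\<le>n. poly q (s i) = 0)"

lemma interlacing_roots_strict_mono_on:
  assumes "interlacing_roots a b p q n r s"
  shows "strict_mono_on {..<n} r" "strict_mono_on {..<Suc n} s"
  using assms unfolding interlacing_roots_def
  by (auto intro!: strict_mono_on_lessThanI intro: order.strict_trans)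

lemma interlacing_roots_order:
  assumes "interlacing_roots a b p q n r s" "j < n" "i \<le> n"
  shows "j < i \<Longrightarrow> r j < s i" and "i \<le> j \<Longrightarrow> s i < r j"
proof -
  have r_between: "s j < r j" "r j < s (Suc j)"
    using assms(1,2) by (auto simp: interlacing_roots_def)
  have s_mono: "strict_mono_on {..<Suc n} s"
    using interlacing_roots_strict_mono_on(2)[OF assms(1)] .
  show "r j < s i" if "j < i"
    using r_between(2) strict_mono_on_less_eq[OF s_mono, of "Suc j" i] that assms(3) by auto
  show "s i < r j" if "i \<le> j"
    using r_between(1) strict_mono_on_less_eq[OF s_mono, of i j] that assms(2) by auto
qed

lemma interlacing_roots_bounds:
  assumes "interlacing_roots a b p q n r s"
  shows "i \<le> n \<Longrightarrow> a < s i \<and> s i < b" and "j < n \<Longrightarrow> a < r j \<and> r j < b"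
proof -
  have ends: "a < s 0" "s n < b"
    using assms by (simp_all add: interlacing_roots_def)
  have s_mono: "strict_mono_on {..<Suc n} s"
    using interlacing_roots_strict_mono_on(2)[OF assms] .
  show s_bounds: "a < s i \<and> s i < b" if "i \<le> n" for i
    using ends strict_mono_on_less_eq[OF s_mono, of 0 i] strict_mono_on_less_eq[OF s_mono, of i n] that
    by auto
  show "a < r j \<and> r j < b" if "j < n"
    using s_bounds[of j] s_bounds[of "Suc j"] assms that by (force simp: interlacing_roots_def)
qed

lemma interlacing_roots_card:
  assumes "interlacing_roots a b p q n r s"
  shows "card (r ` {..<n}) = n" "card (s ` {..<Suc n}) = Suc n"
  using strict_mono_on_imp_inj_on[OF interlacing_roots_strict_mono_on(1)[OF assms]]
    strict_mono_on_imp_inj_on[OF interlacing_roots_strict_mono_on(2)[OF assms]]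
  by (simp_all add: card_image)

lemma interlacing_roots_sign:
  assumes "interlacing_roots a b p q n r s" "degree p = n" "0 < poly p a" "i \<le> n"
  shows "0 < (-1) ^ i * poly p (s i)"
proof -
  have inj: "inj_on r {..<n}"
    using interlacing_roots_strict_mono_on(1)[OF assms(1)] by (rule strict_mono_on_imp_inj_on)
  have below: "r j < s i \<longleftrightarrow> j < i" if "j < n" for j
    using interlacing_roots_order[OF assms(1) that assms(4)] by (meson not_less order.asym)
  have "0 < (-1) ^ card {x \<in> r ` {..<n}. x < s i} * poly p (s i)"
  proof (rule poly_sign_by_roots_below)
    show "card (r ` {..<n}) = degree p"
      using interlacing_roots_card(1)[OF assms(1)] assms(2) by simp
    show "s i \<notin> r ` {..<n}"
    proof
      assume "s i \<in> r ` {..<n}"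
      then obtain j where "j < n" "s i = r j"
        by auto
      then show False
        using interlacing_roots_order[OF assms(1) \<open>j < n\<close> assms(4)] by (cases "j < i") auto
    qed
  qed (use assms(1,3) interlacing_roots_bounds(2)[OF assms(1)] in \<open>auto simp: interlacing_roots_def\<close>)
  moreover have "{x \<in> r ` {..<n}. x < s i} = r ` {..<i}"
    using below assms(4) by auto
  moreover have "card (r ` {..<i}) = i"
    using inj assms(4) by (subst card_image) (auto intro: inj_on_subset)
  ultimately show ?thesis
    by simp
qed

lemma interlacing_roots_step:
  assumes I: "interlacing_roots a b p q n r s" and deg: "degree p = n" and p_at_a: "0 < poly p a"
    and rec: "\<And>x. poly p' x = A x * poly q x - B x * poly p x"
    and B_pos: "\<And>x. a < x \<Longrightarrow> x < b \<Longrightarrow> 0 < B x"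
    and p'_at_a: "0 < poly p' a" and p'_at_b: "0 < (-1) ^ Suc (Suc n) * poly p' b"
  shows "\<exists>u. interlacing_roots a b q p' (Suc n) s u"
proof -
  \<comment> \<open>At a root of q the recurrence leaves only -B * p, so p' alternates in sign along a, s 0, ..., s n, b.\<close>
  define x where "x j = (if j = 0 then a else if j \<le> Suc n then s (j - 1) else b)" for j
  have x_index: "j = 0 \<or> (\<exists>i\<le>n. j = Suc i) \<or> j = Suc (Suc n)" if "j \<le> Suc (Suc n)" for j
    using that by (cases j) auto
  have s_step: "s i < s (Suc i)" if "i < n" for i
    using I that unfolding interlacing_roots_def by (meson order.strict_trans)
  have x_mono: "x j < x (Suc j)" if "j < Suc (Suc n)" for j
    using x_index[of j] that s_step interlacing_roots_bounds(1)[OF I] by (auto simp: x_def)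
  have x_sign: "0 < (-1) ^ j * poly p' (x j)" if "j \<le> Suc (Suc n)" for j
  proof -
    have "0 < (-1) ^ Suc i * poly p' (s i)" if "i \<le> n" for i
    proof -
      have "(-1) ^ Suc i * poly p' (s i) = B (s i) * ((-1) ^ i * poly p (s i))"
        using I that by (simp add: rec interlacing_roots_def)
      also have "\<dots> > 0"
        using B_pos interlacing_roots_bounds(1)[OF I that] interlacing_roots_sign[OF I deg p_at_a that]
        by simp
      finally show ?thesis .
    qed
    then show ?thesis
      using x_index[OF that] p'_at_a p'_at_b by (auto simp: x_def)
  qed
  obtain u where u: "\<forall>j < Suc (Suc n). x j < u j \<and> u j < x (Suc j) \<and> poly p' (u j) = 0"
    using roots_between_alternating_signs[OF x_mono x_sign] by blast
  have "a < u 0" "u (Suc n) < b"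
    using u[rule_format, of 0] u[rule_format, of "Suc n"] by (simp_all add: x_def)
  moreover have "u i < s i \<and> s i < u (Suc i)" if "i < Suc n" for i
    using u[rule_format, of i] u[rule_format, of "Suc i"] that by (simp add: x_def)
  ultimately have "interlacing_roots a b q p' (Suc n) s u"
    using u I by (simp add: interlacing_roots_def less_Suc_eq_le)
  then show ?thesis
    by blast
qed

lemma recurrence_interlacing_roots:
  fixes P :: "nat \<Rightarrow> real poly" and A B :: "nat \<Rightarrow> real \<Rightarrow> real"
  assumes "a < b"
    and deg: "\<And>n. degree (P n) = n"
    and rec: "\<And>n x. poly (P (Suc (Suc n))) x = A n x * poly (P (Suc n)) x - B n x * poly (P n) x"
    and B_pos: "\<And>n x. a < x \<Longrightarrow> x < b \<Longrightarrow> 0 < B n x"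
    and at_a: "\<And>n. 0 < poly (P n) a"
    and at_b: "\<And>n. 0 < (-1) ^ n * poly (P n) b"
  shows "\<exists>r s. interlacing_roots a b (P n) (P (Suc n)) n r s"
proof (induction n)
  case 0
  obtain t where "a < t" "t < b" "poly (P 1) t = 0"
    using poly_IVT_neg[OF \<open>a < b\<close> at_a] at_b[of 1] by auto
  then have "interlacing_roots a b (P 0) (P 1) 0 r (\<lambda>_. t)" for r
    by (simp add: interlacing_roots_def)
  then show ?case
    by auto
next
  case (Suc n)
  then obtain r s where "interlacing_roots a b (P n) (P (Suc n)) n r s"
    by blast
  from interlacing_roots_step[OF this deg at_a rec B_pos at_a at_b] show ?case
    by blast
qed

lemma strictly_interlace_if_interlacing_roots:
  assumes I: "interlacing_roots a b p q n r s"
    and "p \<noteq> 0" "degree p = n" "degree q = Suc n"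
  shows "strictly_interlace p q"
proof -
  define rs where "rs = map r [0..<n]"
  define ss where "ss = map s [0..<Suc n]"
  have mono: "strict_mono_on {..<n} r" "strict_mono_on {..<Suc n} s"
    using interlacing_roots_strict_mono_on[OF I] by simp_all
  have "q \<noteq> 0"
    using assms(4) by auto
  have set_rs: "set rs = r ` {..<n}" and set_ss: "set ss = s ` {..<Suc n}"
    by (simp_all add: rs_def ss_def atLeast0LessThan del: upt_Suc)
  have rs_roots: "card (set rs) = degree p" "\<And>x. x \<in> set rs \<Longrightarrow> poly p x = 0"
    using I interlacing_roots_card(1)[OF I] assms(3) by (auto simp: set_rs interlacing_roots_def)
  have ss_roots: "card (set ss) = degree q" "\<And>x. x \<in> set ss \<Longrightarrow> poly q x = 0"
    using I interlacing_roots_card(2)[OF I] assms(4) by (auto simp: set_ss interlacing_roots_def)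
  have "sorted_wrt (<) rs" "sorted_wrt (<) ss"
    unfolding rs_def ss_def sorted_wrt_iff_nth_less
    by (auto intro: strict_mono_onD[OF mono(1)] strict_mono_onD[OF mono(2)] simp del: upt_Suc)
  moreover have "\<forall>i < length rs. ss ! i < rs ! i \<and> rs ! i < ss ! (i + 1)"
    using I unfolding interlacing_roots_def rs_def ss_def by (simp del: upt_Suc)
  moreover have "length rs = degree p" "length ss = degree q"
    using assms(3,4) by (simp_all add: rs_def ss_def del: upt_Suc)
  ultimately show ?thesis
    unfolding strictly_interlace_def
    using poly_roots_eq_if_card_eq_degree[OF \<open>p \<noteq> 0\<close> _ rs_roots]
      poly_roots_eq_if_card_eq_degree[OF \<open>q \<noteq> 0\<close> _ ss_roots]
      order_eq_1_if_card_eq_degree[OF \<open>p \<noteq> 0\<close> _ rs_roots]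
      order_eq_1_if_card_eq_degree[OF \<open>q \<noteq> 0\<close> _ ss_roots] assms(3,4)
    by (intro exI[of _ rs] exI[of _ ss]) simp
qed

lemma complex_roots_if_interlacing_roots:
  assumes I: "interlacing_roots a b p q n r s" and "p \<noteq> 0" "degree p = n"
    and "poly (map_poly complex_of_real p) z = 0"
  shows "z \<in> \<real> \<and> a < Re z \<and> Re z < b"
proof -
  have "z \<in> complex_of_real ` r ` {..<n}"
    using roots_map_poly_complex_of_real[of p "r ` {..<n}"] assms(2-4) I interlacing_roots_card(1)[OF I]
    by (auto simp: interlacing_roots_def)
  then show ?thesis
    using interlacing_roots_bounds(2)[OF I] by auto
qed

section \<open>Laguerre polynomials\<close>

lemma choose_three_term_identity:
  "(n + 2) * (n + 2 choose k) + (n + 1) * (n choose k)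
     = (2 * n + 3) * (n + 1 choose k) + k * (n + 1 choose (k - 1))"
proof (cases k)
  case (Suc j)
  define A where "A = n + 1 choose Suc j"
  define B where "B = n + 1 choose j"
  have pascal: "n + 2 choose Suc j = A + B"
    by (simp add: A_def B_def)
  have absorb: "(n + 1) * (n choose Suc j) = (n - j) * A"
    using binomial_absorb_comp[of "n + 1" "Suc j"] by (simp add: A_def)
  have shift: "Suc j * A = (Suc n - j) * B"
    using Suc_times_binomial[of j n] binomial_absorb_comp[of "Suc n" j] by (simp add: A_def B_def)
  have "(n + 2) * (A + B) + (n - j) * A = (2 * n + 3) * A + Suc j * B"
  proof (cases "j \<le> n")
    case True
    then obtain m where "n = j + m"
      using le_Suc_ex by blast
    then show ?thesis
      using shift by (simp add: algebra_simps)
  next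
    case False
    then have "A = 0" "n - j = 0"
      by (simp_all add: A_def)
    moreover have "B = 0" if "j \<noteq> Suc n"
      using False that by (simp add: B_def)
    ultimately show ?thesis
      by (cases "j = Suc n") simp_all
  qed
  then show ?thesis
    unfolding Suc pascal absorb diff_Suc_1 A_def[symmetric] B_def[symmetric] .
qed simp

definition laguerre :: "nat \<Rightarrow> real \<Rightarrow> real" where
  "laguerre n x = (\<Sum>k\<le>n. real (n choose k) * (-x) ^ k / fact k)"

lemma laguerre_eq_sum_atMost:
  "n \<le> N \<Longrightarrow> laguerre n x = (\<Sum>k\<le>N. real (n choose k) * (-x) ^ k / fact k)"
  unfolding laguerre_def by (rule sum.mono_neutral_left) auto

lemma neg_mult_laguerre:
  "-x * laguerre n x = (\<Sum>k\<le>Suc n. real (k * (n choose (k - 1))) * (-x) ^ k / fact k)"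
proof -
  have "real (Suc k * (n choose k)) * (-x) ^ Suc k / fact (Suc k) = -x * (real (n choose k) * (-x) ^ k / fact k)"
    for k
    unfolding fact_Suc by (simp add: field_simps del: of_nat_Suc) (simp add: algebra_simps)
  then show ?thesis
    by (simp only: sum.atMost_Suc_shift laguerre_def sum_distrib_left) simp
qed

lemma laguerre_recurrence:
  "real (n + 2) * laguerre (n + 2) x
     = (real (2 * n + 3) - x) * laguerre (n + 1) x - real (n + 1) * laguerre n x"
proof -
  define c where "c m k = real m * (-x) ^ k / fact k" for m k
  have L0: "laguerre n x = (\<Sum>k\<le>n + 2. real (n choose k) * (-x) ^ k / fact k)"
    and L1: "laguerre (n + 1) x = (\<Sum>k\<le>n + 2. real (n + 1 choose k) * (-x) ^ k / fact k)"
    by (intro laguerre_eq_sum_atMost; simp)+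
  have "real (n + 2) * laguerre (n + 2) x + real (n + 1) * laguerre n x
      = (\<Sum>k\<le>n + 2. c ((n + 2) * (n + 2 choose k) + (n + 1) * (n choose k)) k)"
    unfolding L0 laguerre_def[of "n + 2"] sum_distrib_left sum.distrib[symmetric]
    by (rule sum.cong) (simp_all add: c_def add_divide_distrib ring_distribs)
  also have "\<dots> = (\<Sum>k\<le>n + 2. c ((2 * n + 3) * (n + 1 choose k) + k * (n + 1 choose (k - 1))) k)"
    by (simp only: choose_three_term_identity)
  also have "\<dots> = real (2 * n + 3) * laguerre (n + 1) x + -x * laguerre (n + 1) x"
    unfolding neg_mult_laguerre unfolding L1 Suc_eq_plus1 add.assoc one_add_one sum_distrib_left sum.distrib[symmetric]
    by (rule sum.cong) (simp_all add: c_def add_divide_distrib ring_distribs)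
  finally show ?thesis
    by (simp add: algebra_simps)
qed

section \<open>The polynomials \<open>QL\<close>\<close>

lemma sum_choose_mult_choose_power:
  fixes y :: "'a::comm_semiring_1"
  shows "(\<Sum>r\<le>n. of_nat (n choose r) * of_nat (r choose l) * y ^ r)
           = of_nat (n choose l) * y ^ l * (1 + y) ^ (n - l)"
proof (cases "l \<le> n")
  case True
  then obtain m where n: "n = l + m"
    using le_Suc_ex by blast
  have choose: "(j + l choose l) * (l + m choose (j + l)) = (m choose j) * (l + m choose l)" if "j \<le> m" for j
    using choose_mult[of l "j + l" "l + m"] that by (simp add: mult.commute)
  have "(\<Sum>r\<le>n. of_nat (n choose r) * of_nat (r choose l) * y ^ r)
      = (\<Sum>r\<in>{l..l + m}. of_nat (n choose r) * of_nat (r choose l) * y ^ r)"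
    unfolding n by (rule sum.mono_neutral_right) (auto simp: binomial_eq_0 not_le)
  also have "\<dots> = (\<Sum>j\<in>{0..m}. of_nat (n choose l) * (of_nat (m choose j) * y ^ j * 1 ^ (m - j)) * y ^ l)"
    unfolding sum.shift_bounds_cl_nat_ivl[of _ 0 l m, simplified add.commute, simplified]
    by (rule sum.cong) (auto simp: n choose power_add mult_ac simp flip: of_nat_mult)
  also have "\<dots> = of_nat (n choose l) * y ^ l * (y + 1) ^ m"
    by (simp add: binomial_ring[of y 1 m] atLeast0AtMost sum_distrib_left sum_distrib_right mult_ac)
  finally show ?thesis
    by (simp add: n add.commute)
qed (simp add: binomial_eq_0)

lemma poly_QL:
  "poly (QL n) x = (\<Sum>l\<le>n. real (n choose l) * (-x) ^ l * (1 - x) ^ (n - l) / fact l)"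
proof -
  have "poly (QL n) x = (\<Sum>r\<le>n. real (n choose r) * (\<Sum>l\<le>r. real (r choose l) / fact l) * (-x) ^ r)"
    unfolding QL_def poly_sum poly_monom by (simp add: power_minus[of x] mult_ac)
  also have "\<dots> = (\<Sum>r\<le>n. \<Sum>l\<le>n. real (n choose r) * real (r choose l) * (-x) ^ r / fact l)"
  proof (rule sum.cong)
    fix r assume "r \<in> {..n}"
    then have "(\<Sum>l\<le>r. real (r choose l) / fact l) = (\<Sum>l\<le>n. real (r choose l) / fact l)"
      by (intro sum.mono_neutral_left) (auto simp: binomial_eq_0)
    then show "real (n choose r) * (\<Sum>l\<le>r. real (r choose l) / fact l) * (-x) ^ r
        = (\<Sum>l\<le>n. real (n choose r) * real (r choose l) * (-x) ^ r / fact l)"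
      by (simp add: sum_distrib_left sum_distrib_right)
  qed simp
  also have "\<dots> = (\<Sum>l\<le>n. (\<Sum>r\<le>n. real (n choose r) * real (r choose l) * (-x) ^ r) / fact l)"
    by (subst sum.swap) (simp add: sum_divide_distrib)
  also have "\<dots> = (\<Sum>l\<le>n. real (n choose l) * (-x) ^ l * (1 - x) ^ (n - l) / fact l)"
    by (simp add: sum_choose_mult_choose_power)
  finally show ?thesis .
qed

lemma poly_QL_laguerre:
  assumes "x \<noteq> 1"
  shows "poly (QL n) x = (1 - x) ^ n * laguerre n (x / (1 - x))"
  unfolding poly_QL laguerre_def sum_distrib_left
proof (rule sum.cong)
  fix l assume "l \<in> {..n}"
  then have "(1 - x) ^ n = (1 - x) ^ l * (1 - x) ^ (n - l)"
    by (simp flip: power_add)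
  moreover have "(1 - x) ^ l * (- (x / (1 - x))) ^ l = (-x) ^ l"
    using assms by (simp flip: power_mult_distrib)
  ultimately show "real (n choose l) * (-x) ^ l * (1 - x) ^ (n - l) / fact l
      = (1 - x) ^ n * (real (n choose l) * (- (x / (1 - x))) ^ l / fact l)"
    by (simp add: field_simps)
qed simp

lemma poly_QL_0: "poly (QL n) 0 = 1"
  by (simp add: poly_QL zero_power)

lemma poly_QL_1: "poly (QL n) 1 = (-1) ^ n / fact n"
proof -
  have "poly (QL n) 1 = (\<Sum>l\<le>n. if l = n then (-1) ^ n / fact n else 0)"
    unfolding poly_QL by (rule sum.cong) auto
  then show ?thesis
    by simp
qed

lemma QL_recurrence:
  "real (n + 2) * poly (QL (n + 2)) x
     = (real (2 * n + 3) - real (2 * n + 4) * x) * poly (QL (n + 1)) x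
       - real (n + 1) * (1 - x)\<^sup>2 * poly (QL n) x"
proof (cases "x = 1")
  case True
  have "fact (n + 2) = real (n + 2) * (fact (n + 1) :: real)"
    by (simp add: algebra_simps)
  then show ?thesis
    by (simp add: True poly_QL_1 divide_simps)
next
  case False
  define y where "y = x / (1 - x)"
  have v: "(real (2 * n + 3) - y) * (1 - x) = real (2 * n + 3) - real (2 * n + 4) * x"
    using False by (simp add: y_def field_simps)
  have "real (n + 2) * poly (QL (n + 2)) x = (1 - x) ^ (n + 2) * (real (n + 2) * laguerre (n + 2) y)"
    using False by (simp add: poly_QL_laguerre y_def)
  also have "\<dots> = (1 - x) ^ (n + 2) * ((real (2 * n + 3) - y) * laguerre (n + 1) y - real (n + 1) * laguerre n y)"
    by (simp only: laguerre_recurrence)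
  also have "\<dots> = ((real (2 * n + 3) - y) * (1 - x)) * ((1 - x) ^ (n + 1) * laguerre (n + 1) y)
      - real (n + 1) * (1 - x)\<^sup>2 * ((1 - x) ^ n * laguerre n y)"
    by (simp add: power_add power2_eq_square algebra_simps)
  also have "\<dots> = (real (2 * n + 3) - real (2 * n + 4) * x) * poly (QL (n + 1)) x
      - real (n + 1) * (1 - x)\<^sup>2 * poly (QL n) x"
    by (simp only: v poly_QL_laguerre[OF False] flip: y_def)
  finally show ?thesis .
qed

lemma degree_QL: "degree (QL n) = n"
proof -
  have coeff: "coeff (QL n) k
      = (if k \<le> n then real (n choose k) * (\<Sum>l\<le>k. real (k choose l) / fact l) * (-1) ^ k else 0)" for k
    unfolding QL_def coeff_sum by (auto simp: sum.delta)
  have "0 < (\<Sum>l\<le>n. real (n choose l) / fact l)"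
    by (rule sum_pos2[of _ 0]) auto
  then have "coeff (QL n) n \<noteq> 0"
    by (simp add: coeff)
  moreover have "degree (QL n) \<le> n"
    by (rule degree_le) (simp add: coeff)
  ultimately show ?thesis
    by (simp add: le_antisym le_degree)
qed

theorem theorem5p3:
  fixes n :: nat
  shows "(\<forall>z::complex. poly (map_poly complex_of_real (QL n)) z = 0 \<longrightarrow>
            z \<in> \<real> \<and> 0 < Re z \<and> Re z < 1)
         \<and> strictly_interlace (QL n) (QL (Suc n))"
proof -
  define A where "A k x = (real (2 * k + 3) - real (2 * k + 4) * x) / real (k + 2)" for k x
  define B where "B k x = real (k + 1) * (1 - x)\<^sup>2 / real (k + 2)" for k x
  have "poly (QL (Suc (Suc k))) x = A k x * poly (QL (Suc k)) x - B k x * poly (QL k) x" for k x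
  proof -
    have "real (k + 2) * (A k x * poly (QL (k + 1)) x - B k x * poly (QL k) x)
        = real (k + 2) * poly (QL (k + 2)) x"
      unfolding QL_recurrence A_def B_def right_diff_distrib by simp
    then show ?thesis
      by simp
  qed
  moreover have "0 < B k x" if "0 < x" "x < 1" for k x
    using that by (simp add: B_def)
  ultimately obtain r s where I: "interlacing_roots 0 1 (QL n) (QL (Suc n)) n r s"
    using recurrence_interlacing_roots[of 0 1 QL A B n]
    by (auto simp: degree_QL poly_QL_0 poly_QL_1 simp flip: power_add mult_2)
  have "QL n \<noteq> 0"
    using poly_QL_0[of n] by auto
  then show ?thesis
    using complex_roots_if_interlacing_roots[OF I] strictly_interlace_if_interlacing_roots[OF I]
    by (simp add: degree_QL)
qed

end
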